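(* For all sufficiently large positive integers $n$, the size-Ramsey number of the path $P_n$ satisfies $\hat{r}(P_n) < 137n$.
   Context: $P_n$ denotes the path on $n$ vertices. For graphs $F$ and $G$, write $G \to F$ if every colouring of the edges of $G$ with two colours yields a monochromatic copy of $F$. The size-Ramsey number of $F$ is $\hat{r}(F) = \min\{|E(G)| : G \to F\}$. *)

theory Defs
  imports Main
begin

text \<open>Vertices are natural numbers (every finite graph is isomorphic to one
  on natural-number vertices, so this loses nothing for the size-Ramsey number).\<close>
definition simple_graph :: "'a set set \<Rightarrow> bool" where
  "simple_graph E \<longleftrightarrow> finite E \<and> (\<forall>e\<in>E. card e = 2)"

definition mono_path :: "'a set set \<Rightarrow> ('a set \<Rightarrow> bool) \<Rightarrow> nat \<Rightarrow> bool" where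
  "mono_path E c n \<longleftrightarrow> (\<exists>vs col. length vs = n \<and> distinct vs \<and>
     (\<forall>i. i + 1 < n \<longrightarrow> {vs ! i, vs ! (i+1)} \<in> E \<and> c {vs ! i, vs ! (i+1)} = col))"

definition arrows_path :: "'a set set \<Rightarrow> nat \<Rightarrow> bool" where
  "arrows_path E n \<longleftrightarrow> (\<forall>c :: 'a set \<Rightarrow> bool. mono_path E c n)"

definition size_ramsey_path :: "nat \<Rightarrow> nat" where
  "size_ramsey_path n = (LEAST m. \<exists>E :: nat set set. simple_graph E \<and> card E = m \<and> arrows_path E n)"

end

theory Submission
  imports Defs "HOL-Library.FuncSet"
begin

text \<open>Following Dudek and Pralat. A union bound over the at most \<open>3^(6n)\<close> pairs of disjoint
  vertex sets shows that some graph with \<open>136n\<close> edges on \<open>6n\<close> vertices joins every two disjoint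
  \<open>n\<close>-sets by an edge. Such a graph arrows \<open>P\<^sub>n\<close>: if a 2-colouring had no monochromatic \<open>P\<^sub>n\<close>,
  a depth-first search in the red graph would give disjoint sets \<open>S\<close>, \<open>T\<close> of size at least
  \<open>5n/2\<close> with no red edge between them, and a second depth-first search in the blue bipartite
  graph between \<open>S\<close> and \<open>T\<close> would give \<open>n\<close>-sets \<open>X \<subseteq> S\<close>, \<open>Y \<subseteq> T\<close> with no blue, hence no
  edge at all between them.\<close>

definition path_in :: "'a set set \<Rightarrow> 'a list \<Rightarrow> bool" where
  "path_in H vs \<longleftrightarrow> distinct vs \<and> (\<forall>i. Suc i < length vs \<longrightarrow> {vs ! i, vs ! Suc i} \<in> H)"

lemma mono_path_if_path_in_colour_class:
  assumes "path_in H vs" "length vs = n" "H \<subseteq> {e \<in> E. c e = col}"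
  shows "mono_path E c n"
  using assms unfolding mono_path_def path_in_def by (intro exI[of _ vs] exI[of _ col]) auto

lemma path_in_butlast: "path_in H vs \<Longrightarrow> path_in H (butlast vs)"
  unfolding path_in_def by (auto simp: nth_butlast distinct_butlast)

lemma path_in_snoc:
  assumes "path_in H vs" and "w \<notin> set vs" and "vs \<noteq> [] \<longrightarrow> {last vs, w} \<in> H"
  shows "path_in H (vs @ [w])"
  unfolding path_in_def
proof (intro conjI allI impI)
  show "distinct (vs @ [w])" using assms(1,2) by (simp add: path_in_def)
next
  fix i assume i: "Suc i < length (vs @ [w])"
  show "{(vs @ [w]) ! i, (vs @ [w]) ! Suc i} \<in> H"
  proof (cases "Suc i < length vs")
    case True
    then show ?thesis using assms(1) by (simp add: path_in_def nth_append)
  next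
    case False
    with i have "i = length vs - 1" "vs \<noteq> []" by auto
    then show ?thesis using assms(3) by (simp add: nth_append last_conv_nth)
  qed
qed

lemma path_in_bipartite_card:
  assumes path: "path_in H vs" and AB: "A \<inter> B = {}"
    and bipartite: "\<And>e. e \<in> H \<Longrightarrow> \<exists>x\<in>A. \<exists>y\<in>B. e = {x, y}"
  shows "2 * card (set vs \<inter> A) \<le> length vs + 1"
proof -
  define I where "I = {i. i < length vs \<and> vs ! i \<in> A}"
  have "distinct vs" using path by (simp add: path_in_def)
  then have "bij_betw (\<lambda>i. vs ! i) I (set vs \<inter> A)"
    by (auto simp: bij_betw_def inj_on_def I_def in_set_conv_nth nth_eq_iff_index_eq)
  then have card_I: "card (set vs \<inter> A) = card I" by (simp add: bij_betw_same_card)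
  have "Suc i \<notin> I" if "i \<in> I" for i
  proof
    assume "Suc i \<in> I"
    then have "{vs ! i, vs ! Suc i} \<in> H" using path by (auto simp: path_in_def I_def)
    then show False using bipartite AB that \<open>Suc i \<in> I\<close> by (fastforce simp: I_def doubleton_eq_iff)
  qed
  then have "Suc ` I \<subseteq> {0..length vs} - I" by (auto simp: I_def)
  then have "card (Suc ` I) \<le> card ({0..length vs} - I)" by (intro card_mono) auto
  moreover have "I \<subseteq> {0..length vs}" by (auto simp: I_def)
  then have "card ({0..length vs} - I) = Suc (length vs) - card I"
    by (simp add: card_Diff_subset finite_subset)
  ultimately show ?thesis using card_I by (simp add: card_image)
qed

text \<open>A state of depth-first search in \<open>H\<close>: \<open>S\<close> is unvisited, the stack \<open>U\<close> is a path, \<open>T\<close> is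
  finished. A vertex is only finished once it has no neighbour in \<open>S\<close>, and the stack never
  reaches length \<open>n\<close> when \<open>H\<close> has no path on \<open>n\<close> vertices.\<close>
definition dfs_state :: "'a set \<Rightarrow> 'a set set \<Rightarrow> nat \<Rightarrow> 'a set \<Rightarrow> 'a list \<Rightarrow> 'a set \<Rightarrow> bool" where
  "dfs_state V H n S U T \<longleftrightarrow> S \<union> set U \<union> T = V \<and> S \<inter> set U = {} \<and> S \<inter> T = {} \<and> set U \<inter> T = {}
     \<and> path_in H U \<and> length U < n \<and> (\<forall>x\<in>S. \<forall>y\<in>T. {x, y} \<notin> H)"

lemma dfs_step:
  assumes "finite V" and no_path: "\<nexists>vs. length vs = n \<and> path_in H vs"
    and st: "dfs_state V H n S U T" and unfinished: "S \<noteq> {} \<or> U \<noteq> []"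
  shows "\<exists>S' U' T'. dfs_state V H n S' U' T' \<and> (T' = T \<or> (\<exists>w. T' = insert w T))
          \<and> 2 * card S' + length U' < 2 * card S + length U"
proof (cases "U = [] \<or> (\<exists>w\<in>S. {last U, w} \<in> H)")
  case True
  then obtain w where w: "w \<in> S" and adj: "U \<noteq> [] \<longrightarrow> {last U, w} \<in> H"
    using unfinished by auto
  have "finite S" using st \<open>finite V\<close> by (auto simp: dfs_state_def intro: finite_subset)
  have "w \<notin> set U" using st w by (auto simp: dfs_state_def)
  then have path: "path_in H (U @ [w])"
    using st adj by (intro path_in_snoc) (auto simp: dfs_state_def)
  moreover have "length (U @ [w]) \<noteq> n" using no_path path by blast
  ultimately have "length (U @ [w]) < n" using st by (simp add: dfs_state_def)
  then have "dfs_state V H n (S - {w}) (U @ [w]) T"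
    using st w \<open>w \<notin> set U\<close> path by (auto simp: dfs_state_def)
  moreover have "Suc (card (S - {w})) = card S" using \<open>finite S\<close> w by (rule card_Suc_Diff1)
  ultimately show ?thesis by (intro exI[of _ "S - {w}"] exI[of _ "U @ [w]"] exI[of _ T]) auto
next
  case False
  then have "U \<noteq> []" and not_adj: "\<forall>w\<in>S. {last U, w} \<notin> H" by auto
  have "distinct U" using st by (simp add: dfs_state_def path_in_def)
  moreover have U: "U = butlast U @ [last U]" using \<open>U \<noteq> []\<close> by simp
  ultimately have "last U \<notin> set (butlast U)" by (metis distinct_append disjoint_iff list.set_intros(1))
  moreover have "set U = insert (last U) (set (butlast U))" using arg_cong[OF U, of set] by simp
  ultimately have "dfs_state V H n S (butlast U) (insert (last U) T)"
    using st not_adj path_in_butlast by (auto simp: dfs_state_def insert_commute)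
  then show ?thesis using \<open>U \<noteq> []\<close> by (intro exI[of _ S] exI[of _ "butlast U"] exI[of _ "insert (last U) T"]) auto
qed

text \<open>\<open>T\<close> grows by at most one vertex per step until it is \<open>V\<close>, so it passes through a set
  where \<open>Q\<close> first holds.\<close>
lemma dfs_reaches:
  assumes "finite V" and no_path: "\<nexists>vs. length vs = n \<and> path_in H vs"
    and R_insert: "\<And>X w. X \<subseteq> V \<Longrightarrow> w \<in> V \<Longrightarrow> \<not> Q X \<Longrightarrow> R X \<Longrightarrow> R (insert w X)"
    and Q_V: "R V \<Longrightarrow> Q V"
  shows "dfs_state V H n S U T \<Longrightarrow> R T \<Longrightarrow> \<exists>S' U' T'. dfs_state V H n S' U' T' \<and> R T' \<and> Q T'"
proof (induction "2 * card S + length U" arbitrary: S U T rule: less_induct)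
  case less
  show ?case
  proof (cases "Q T")
    case True
    with less.prems show ?thesis by blast
  next
    case False
    have "S \<noteq> {} \<or> U \<noteq> []"
    proof (rule ccontr)
      assume "\<not> (S \<noteq> {} \<or> U \<noteq> [])"
      then have "T = V" using less.prems(1) by (auto simp: dfs_state_def)
      then show False using Q_V False less.prems(2) by simp
    qed
    then obtain S' U' T' where st: "dfs_state V H n S' U' T'"
      and grows: "T' = T \<or> (\<exists>w. T' = insert w T)"
      and decreases: "2 * card S' + length U' < 2 * card S + length U"
      using dfs_step[OF \<open>finite V\<close> no_path less.prems(1)] by blast
    have "R T'"
    proof (cases "T' = T")
      case False
      then obtain w where w: "T' = insert w T" using grows by blast
      have "T \<subseteq> V" "w \<in> V" using less.prems(1) st w by (auto simp: dfs_state_def)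
      then show ?thesis using R_insert \<open>\<not> Q T\<close> less.prems(2) w by blast
    qed (use less.prems(2) in simp)
    then show ?thesis using less.hyps[OF decreases st] by blast
  qed
qed

lemma dfs_state_card_split:
  assumes "finite V" and st: "dfs_state V H n S U T" and "A \<subseteq> V"
  shows "card A = card (S \<inter> A) + card (set U \<inter> A) + card (T \<inter> A)"
proof -
  have "finite S" "finite T" using st \<open>finite V\<close> by (auto simp: dfs_state_def intro: finite_subset)
  have "A = (S \<inter> A) \<union> (set U \<inter> A) \<union> (T \<inter> A)" using st \<open>A \<subseteq> V\<close> by (auto simp: dfs_state_def)
  also have "card \<dots> = card ((S \<inter> A) \<union> (set U \<inter> A)) + card (T \<inter> A)"
    using st \<open>finite S\<close> \<open>finite T\<close> by (intro card_Un_disjoint) (auto simp: dfs_state_def)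
  also have "card ((S \<inter> A) \<union> (set U \<inter> A)) = card (S \<inter> A) + card (set U \<inter> A)"
    using st \<open>finite S\<close> by (intro card_Un_disjoint) (auto simp: dfs_state_def)
  finally show ?thesis .
qed

lemma dfs_initial_state: "0 < n \<Longrightarrow> dfs_state V H n V [] {}"
  by (simp add: dfs_state_def path_in_def)

lemma no_long_path_split:
  assumes "finite V" and no_path: "\<nexists>vs. length vs = n \<and> path_in H vs"
    and "0 < n" and "k \<le> card V"
  obtains S T where "S \<subseteq> V" "T \<subseteq> V" "S \<inter> T = {}" "card T = k" "card V < card S + k + n"
    "\<forall>x\<in>S. \<forall>y\<in>T. {x, y} \<notin> H"
proof -
  have "\<exists>S U T. dfs_state V H n S U T \<and> card T \<le> k \<and> k \<le> card T"
  proof (rule dfs_reaches[OF \<open>finite V\<close> no_path _ _ dfs_initial_state[OF \<open>0 < n\<close>]])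
    show "card (insert w X) \<le> k" if "X \<subseteq> V" "\<not> k \<le> card X" for X w
      using that \<open>finite V\<close> by (simp add: card_insert_if finite_subset)
  qed (use \<open>k \<le> card V\<close> in auto)
  then obtain S U T where st: "dfs_state V H n S U T" and "card T = k" by (auto simp: le_antisym)
  have "S \<subseteq> V" "set U \<subseteq> V" "T \<subseteq> V" using st by (auto simp: dfs_state_def)
  then have "card V = card S + card (set U) + card T"
    using dfs_state_card_split[OF \<open>finite V\<close> st order_refl] by (simp add: Int_absorb2)
  moreover have "card (set U) < n" using st card_length[of U] by (auto simp: dfs_state_def)
  ultimately have "card V < card S + k + n" using \<open>card T = k\<close> by linarith
  with that st \<open>card T = k\<close> \<open>S \<subseteq> V\<close> \<open>T \<subseteq> V\<close> show thesis by (simp add: dfs_state_def)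
qed

lemma bipartite_no_long_path_split:
  assumes "finite A" "finite B" "A \<inter> B = {}"
    and bipartite: "\<And>e. e \<in> H \<Longrightarrow> \<exists>x\<in>A. \<exists>y\<in>B. e = {x, y}"
    and no_path: "\<nexists>vs. length vs = n \<and> path_in H vs"
    and "0 < n" and A: "2 * n + n div 2 \<le> card A" and B: "2 * n + n div 2 \<le> card B"
  obtains X Y where "X \<subseteq> A" "Y \<subseteq> B" "n \<le> card X" "n \<le> card Y" "\<forall>x\<in>X. \<forall>y\<in>Y. {x, y} \<notin> H"
proof -
  define R where "R T \<longleftrightarrow> card (T \<inter> A) \<le> n \<and> card (T \<inter> B) \<le> n" for T
  define Q where "Q T \<longleftrightarrow> n \<le> card (T \<inter> A) \<or> n \<le> card (T \<inter> B)" for T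
  have "finite (A \<union> B)" using assms(1,2) by simp
  have "\<exists>S U T. dfs_state (A \<union> B) H n S U T \<and> R T \<and> Q T"
  proof (rule dfs_reaches[OF \<open>finite (A \<union> B)\<close> no_path _ _ dfs_initial_state[OF \<open>0 < n\<close>]])
    fix X w assume X: "X \<subseteq> A \<union> B" "\<not> Q X" "R X"
    have "finite X" using X(1) \<open>finite (A \<union> B)\<close> by (rule finite_subset)
    then have "card (insert w X \<inter> C) \<le> Suc (card (X \<inter> C))" for C
      by (cases "w \<in> C") (auto simp: card_insert_if)
    then show "R (insert w X)" using X unfolding R_def Q_def by (meson Suc_leI not_le order_trans)
  qed (use A in \<open>auto simp: R_def Q_def\<close>)
  then obtain S U T where st: "dfs_state (A \<union> B) H n S U T" and "R T" "Q T" by blast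
  have no_edge: "{x, y} \<notin> H" if "x \<in> S" "y \<in> T" for x y using st that by (auto simp: dfs_state_def)
  have "length U + 1 \<le> n" using st by (simp add: dfs_state_def)
  moreover have "2 * card (set U \<inter> A) \<le> length U + 1"
    using st \<open>A \<inter> B = {}\<close> bipartite by (intro path_in_bipartite_card) (auto simp: dfs_state_def)
  moreover have "2 * card (set U \<inter> B) \<le> length U + 1"
  proof (rule path_in_bipartite_card[where B = A])
    show "\<exists>x\<in>B. \<exists>y\<in>A. e = {x, y}" if "e \<in> H" for e
      using bipartite[OF that] by (auto simp: insert_commute)
  qed (use st \<open>A \<inter> B = {}\<close> in \<open>auto simp: dfs_state_def\<close>)
  ultimately have "2 * card (set U \<inter> A) \<le> n" "2 * card (set U \<inter> B) \<le> n" by linarith+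
  then have U_small: "card (set U \<inter> A) \<le> n div 2" "card (set U \<inter> B) \<le> n div 2"
    using div_le_mono[of _ n 2] by fastforce+
  have "card A = card (S \<inter> A) + card (set U \<inter> A) + card (T \<inter> A)"
    "card B = card (S \<inter> B) + card (set U \<inter> B) + card (T \<inter> B)"
    using dfs_state_card_split[OF \<open>finite (A \<union> B)\<close> st] by simp_all
  with A B U_small \<open>R T\<close> have "n \<le> card (S \<inter> A)" "n \<le> card (S \<inter> B)"
    unfolding R_def by linarith+
  show thesis
  proof (cases "n \<le> card (T \<inter> B)")
    case True
    then show thesis using that[of "S \<inter> A" "T \<inter> B"] \<open>n \<le> card (S \<inter> A)\<close> no_edge by blast
  next
    case False
    then have "n \<le> card (T \<inter> A)" using \<open>Q T\<close> unfolding Q_def by simp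
    moreover have "{x, y} \<notin> H" if "x \<in> T" "y \<in> S" for x y
      using no_edge[OF that(2,1)] by (simp add: insert_commute)
    ultimately show thesis using that[of "T \<inter> A" "S \<inter> B"] \<open>n \<le> card (S \<inter> B)\<close> by blast
  qed
qed

definition joins_large_sets :: "'a set set \<Rightarrow> 'a set \<Rightarrow> nat \<Rightarrow> bool" where
  "joins_large_sets E V k \<longleftrightarrow> (\<forall>X Y. X \<subseteq> V \<longrightarrow> Y \<subseteq> V \<longrightarrow> X \<inter> Y = {} \<longrightarrow> k \<le> card X \<longrightarrow> k \<le> card Y
        \<longrightarrow> (\<exists>x\<in>X. \<exists>y\<in>Y. {x, y} \<in> E))"

lemma arrows_path_if_joins_large_sets:
  assumes "finite V" "6 * n \<le> card V" "0 < n" and joins: "joins_large_sets E V n"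
  shows "arrows_path E n"
  unfolding arrows_path_def
proof
  fix c :: "'a set \<Rightarrow> bool"
  show "mono_path E c n"
  proof (rule ccontr)
    assume no_mono: "\<not> mono_path E c n"
    have no_path: "\<nexists>vs. length vs = n \<and> path_in H vs" if "H \<subseteq> {e \<in> E. c e = col}" for H col
      using no_mono mono_path_if_path_in_colour_class[OF _ _ that] by blast
    define k where "k = 2 * n + n div 2"
    have "k \<le> card V" using assms(2) div_le_dividend[of n 2] unfolding k_def by linarith
    then obtain S T where "S \<subseteq> V" "T \<subseteq> V" "S \<inter> T = {}" "card T = k" "card V < card S + k + n"
      and no_red: "\<forall>x\<in>S. \<forall>y\<in>T. {x, y} \<notin> {e \<in> E. c e = True}"
      by (rule no_long_path_split[OF \<open>finite V\<close> no_path[OF subset_refl] \<open>0 < n\<close>])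
    have "k \<le> card S" using \<open>card V < card S + k + n\<close> assms(2) unfolding k_def by linarith
    define H where "H = {e \<in> E. c e = False \<and> (\<exists>x\<in>S. \<exists>y\<in>T. e = {x, y})}"
    have "finite S" "finite T" using \<open>S \<subseteq> V\<close> \<open>T \<subseteq> V\<close> \<open>finite V\<close> by (auto intro: finite_subset)
    moreover have "\<exists>x\<in>S. \<exists>y\<in>T. e = {x, y}" if "e \<in> H" for e using that by (simp add: H_def)
    moreover have "\<nexists>vs. length vs = n \<and> path_in H vs" by (rule no_path[of H False]) (auto simp: H_def)
    moreover have "2 * n + n div 2 \<le> card S" "2 * n + n div 2 \<le> card T"
      using \<open>k \<le> card S\<close> \<open>card T = k\<close> unfolding k_def by simp_all
    ultimately obtain X Y where "X \<subseteq> S" "Y \<subseteq> T" "n \<le> card X" "n \<le> card Y"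
      and no_blue: "\<forall>x\<in>X. \<forall>y\<in>Y. {x, y} \<notin> H"
      by (rule bipartite_no_long_path_split[OF _ _ \<open>S \<inter> T = {}\<close> _ _ \<open>0 < n\<close>])
    moreover have "X \<subseteq> V" "Y \<subseteq> V" "X \<inter> Y = {}"
      using \<open>X \<subseteq> S\<close> \<open>Y \<subseteq> T\<close> \<open>S \<subseteq> V\<close> \<open>T \<subseteq> V\<close> \<open>S \<inter> T = {}\<close> by auto
    ultimately obtain x y where "x \<in> X" "y \<in> Y" "{x, y} \<in> E"
      using joins unfolding joins_large_sets_def by blast
    with no_red no_blue \<open>X \<subseteq> S\<close> \<open>Y \<subseteq> T\<close> show False unfolding H_def by blast
  qed
qed

lemma choose_mult_power_le:
  fixes a b :: nat
  assumes "a \<le> b"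
  shows "(a choose m) * b ^ m \<le> (b choose m) * a ^ m"
proof (induction m)
  case (Suc m)
  have step: "(c choose Suc m) * Suc m = (c choose m) * (c - m)" for c :: nat
    using binomial_absorption[of m c] binomial_absorb_comp[of c m] by (simp add: mult.commute)
  have "(a - m) * b = a * b - m * b" by (simp add: diff_mult_distrib)
  also have "\<dots> \<le> a * b - m * a" using assms by (intro diff_le_mono2) simp
  also have "\<dots> = (b - m) * a" by (metis diff_mult_distrib mult.commute)
  finally have "(a - m) * b \<le> (b - m) * a" .
  have "(a choose Suc m) * b ^ Suc m * Suc m = ((a choose Suc m) * Suc m) * (b ^ m * b)"
    by (simp only: power_Suc ac_simps)
  also have "\<dots> = ((a choose m) * b ^ m) * ((a - m) * b)"
    unfolding step by (simp only: ac_simps)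
  also have "\<dots> \<le> ((b choose m) * a ^ m) * ((b - m) * a)"
    using Suc.IH \<open>(a - m) * b \<le> (b - m) * a\<close> by (rule mult_le_mono)
  also have "\<dots> = ((b choose Suc m) * Suc m) * (a ^ m * a)"
    unfolding step by (simp only: ac_simps)
  also have "\<dots> = (b choose Suc m) * a ^ Suc m * Suc m"
    by (simp only: power_Suc ac_simps)
  finally show ?case by (metis mult_le_cancel2 zero_less_Suc)
qed simp

lemma card_disjoint_pairs_le:
  assumes "finite V"
  shows "card {(X, Y). X \<subseteq> V \<and> Y \<subseteq> V \<and> X \<inter> Y = {}} \<le> 3 ^ card V"
proof -
  define D where "D = {(X, Y). X \<subseteq> V \<and> Y \<subseteq> V \<and> X \<inter> Y = {}}"
  define f where "f p = (\<lambda>v\<in>V. if v \<in> fst p then 0 else if v \<in> snd p then 1 else (2::nat))" for p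
  have "f ` D \<subseteq> (\<Pi>\<^sub>E v\<in>V. {0, 1, 2})" unfolding f_def by (rule image_subsetI) (simp add: restrict_PiE_iff)
  moreover have "inj_on f D"
  proof (rule inj_onI)
    fix p q assume "p \<in> D" "q \<in> D" "f p = f q"
    have "fst r = {v\<in>V. f r v = 0} \<and> snd r = {v\<in>V. f r v = 1}" if "r \<in> D" for r
      using that unfolding D_def f_def by (cases r) auto
    then show "p = q" using \<open>p \<in> D\<close> \<open>q \<in> D\<close> \<open>f p = f q\<close> by (simp add: prod_eq_iff)
  qed
  ultimately have "card D \<le> card (\<Pi>\<^sub>E v\<in>V. {0, 1, 2::nat})"
    using assms by (intro card_inj_on_le) (auto intro: finite_PiE)
  also have "\<dots> = 3 ^ card V" using assms by (simp add: card_PiE numeral_3_eq_3)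
  finally show ?thesis unfolding D_def .
qed

lemma exists_subset_meeting_all:
  assumes "finite P" "finite D" and F: "\<And>i. i \<in> D \<Longrightarrow> F i \<subseteq> P \<and> K \<le> card (F i)"
    and few: "card D * ((card P - K) choose m) < card P choose m"
  obtains E where "E \<subseteq> P" "card E = m" "\<And>i. i \<in> D \<Longrightarrow> E \<inter> F i \<noteq> {}"
proof -
  define Avoiding where "Avoiding i = {E. E \<subseteq> P - F i \<and> card E = m}" for i
  have Avoiding_small: "card (Avoiding i) \<le> (card P - K) choose m" if "i \<in> D" for i
  proof -
    have "card (Avoiding i) = card (P - F i) choose m"
      unfolding Avoiding_def using \<open>finite P\<close> by (simp add: n_subsets)
    also have "\<dots> \<le> (card P - K) choose m"
      using F[OF that] \<open>finite P\<close> finite_subset[of "F i" P]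
      by (intro binomial_right_mono) (simp add: card_Diff_subset diff_le_mono2)
    finally show ?thesis .
  qed
  have "card (\<Union>i\<in>D. Avoiding i) \<le> (\<Sum>i\<in>D. card (Avoiding i))"
    by (rule card_UN_le[OF \<open>finite D\<close>])
  also have "\<dots> \<le> card D * ((card P - K) choose m)"
    using sum_mono[of D _ "\<lambda>_. (card P - K) choose m", OF Avoiding_small] by simp
  also have "\<dots> < card {E. E \<subseteq> P \<and> card E = m}"
    using few \<open>finite P\<close> by (simp add: n_subsets)
  finally have few_avoiding: "card (\<Union>i\<in>D. Avoiding i) < card {E. E \<subseteq> P \<and> card E = m}" .
  have "finite (\<Union>i\<in>D. Avoiding i)"
    by (rule finite_subset[of _ "Pow P"]) (use \<open>finite P\<close> in \<open>auto simp: Avoiding_def\<close>)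
  then have "\<not> {E. E \<subseteq> P \<and> card E = m} \<subseteq> (\<Union>i\<in>D. Avoiding i)"
    using card_mono few_avoiding leD by blast
  then obtain E where E: "E \<subseteq> P" "card E = m" and "\<forall>i\<in>D. E \<notin> Avoiding i" by blast
  show thesis
  proof (rule that[OF E])
    fix i assume "i \<in> D"
    with \<open>\<forall>i\<in>D. E \<notin> Avoiding i\<close> E show "E \<inter> F i \<noteq> {}" unfolding Avoiding_def by auto
  qed
qed

text \<open>By \<open>choose_mult_power_le\<close> the ratio of the two binomials is at most
  \<open>(1 - K/M)^m \<le> (17/18)^m\<close>, and \<open>3^6 \<cdot> 17^136 < 18^136\<close>.\<close>
lemma choose_deficit_bound:
  fixes M K n :: nat
  assumes "K \<le> M" "M \<le> 18 * K" "136 * n \<le> M" "0 < n"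
  shows "3 ^ (6 * n) * ((M - K) choose (136 * n)) < M choose (136 * n)"
proof -
  define m where "m = 136 * n"
  define C where "C = M choose m"
  define C' where "C' = (M - K) choose m"
  have "0 < C" "0 < M" using assms unfolding C_def m_def by auto
  have ratio: "C' * M ^ m \<le> C * (M - K) ^ m"
    unfolding C_def C'_def by (rule choose_mult_power_le) simp
  have shrink: "(18 * (M - K)) ^ m \<le> (17 * M) ^ m" using assms(1,2) by (intro power_mono) auto
  have "3 ^ (6 * n) * 17 ^ m < (18::nat) ^ m"
  proof -
    have "(3 ^ 6 * 17 ^ 136) ^ n < ((18::nat) ^ 136) ^ n" using \<open>0 < n\<close> by (intro power_strict_mono) simp_all
    then show ?thesis by (simp only: m_def power_mult power_mult_distrib)
  qed
  have "3 ^ (6 * n) * C' * (M ^ m * 18 ^ m) = 3 ^ (6 * n) * (C' * M ^ m) * 18 ^ m"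
    by (simp only: ac_simps)
  also have "\<dots> \<le> 3 ^ (6 * n) * (C * (M - K) ^ m) * 18 ^ m" using ratio by simp
  also have "\<dots> = 3 ^ (6 * n) * C * (18 * (M - K)) ^ m" by (simp add: power_mult_distrib mult_ac)
  also have "\<dots> \<le> 3 ^ (6 * n) * C * (17 * M) ^ m" using shrink by simp
  also have "\<dots> = (C * M ^ m) * (3 ^ (6 * n) * 17 ^ m)" by (simp add: power_mult_distrib mult_ac)
  also have "\<dots> < (C * M ^ m) * 18 ^ m"
    using \<open>3 ^ (6 * n) * 17 ^ m < 18 ^ m\<close> \<open>0 < C\<close> \<open>0 < M\<close> by simp
  finally have "3 ^ (6 * n) * C' * (M ^ m * 18 ^ m) < C * (M ^ m * 18 ^ m)" by (simp only: ac_simps)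
  then show ?thesis unfolding C_def C'_def m_def by (simp only: mult_less_cancel2)
qed

lemma card_doubletons_Times:
  assumes "finite X" "finite Y" "X \<inter> Y = {}"
  shows "card ((\<lambda>(x, y). {x, y}) ` (X \<times> Y)) = card X * card Y"
proof -
  have "inj_on (\<lambda>(x, y). {x, y}) (X \<times> Y)"
    using assms(3) by (auto simp: inj_on_def doubleton_eq_iff)
  then show ?thesis using assms(1,2) by (simp add: card_image card_cartesian_product)
qed

lemma choose_deficit_bound_complete_graph:
  fixes n :: nat
  assumes "8 \<le> n"
  shows "3 ^ (6 * n) * ((3 * n * (6 * n - 1) - n * n) choose (136 * n)) < (3 * n * (6 * n - 1)) choose (136 * n)"
proof (rule choose_deficit_bound)
  show "n * n \<le> 3 * n * (6 * n - 1)"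
    using mult_le_mono2[of n "3 * (6 * n - 1)" n] assms by (simp add: mult.assoc)
  show "3 * n * (6 * n - 1) \<le> 18 * (n * n)" by (simp add: algebra_simps diff_mult_distrib2)
  show "136 * n \<le> 3 * n * (6 * n - 1)"
    using mult_le_mono2[of 136 "3 * (6 * n - 1)" n] assms by (simp add: algebra_simps)
qed (use assms in simp)

lemma exists_graph_joining_large_sets:
  fixes n :: nat
  assumes "8 \<le> n"
  obtains E :: "nat set set" where "simple_graph E" "card E = 136 * n" "joins_large_sets E {0..<6 * n} n"
proof -
  define V where "V = {0..<6 * n}"
  define P where "P = {e. e \<subseteq> V \<and> card e = 2}"
  define D where "D = {(X, Y). X \<subseteq> V \<and> Y \<subseteq> V \<and> X \<inter> Y = {} \<and> n \<le> card X \<and> n \<le> card Y}"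
  define cross where "cross p = (\<lambda>(x, y). {x, y}) ` (fst p \<times> snd p)" for p :: "nat set \<times> nat set"
  have "finite V" "card V = 6 * n" by (simp_all add: V_def)
  have "finite P" by (rule finite_subset[of _ "Pow V"]) (use \<open>finite V\<close> in \<open>auto simp: P_def\<close>)
  have "finite D" by (rule finite_subset[of _ "Pow V \<times> Pow V"]) (use \<open>finite V\<close> in \<open>auto simp: D_def\<close>)
  have "card P = (6 * n) choose 2"
    unfolding P_def using n_subsets[OF \<open>finite V\<close>, of 2] \<open>card V = 6 * n\<close> by simp
  also have "\<dots> = 3 * n * (6 * n - 1)"
  proof -
    have "6 * n * (6 * n - 1) = 2 * (3 * n * (6 * n - 1))" by simp
    then show ?thesis by (simp add: choose_two)
  qed
  finally have card_P: "card P = 3 * n * (6 * n - 1)" .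
  have "finite {(X, Y). X \<subseteq> V \<and> Y \<subseteq> V \<and> X \<inter> Y = {}}"
    by (rule finite_subset[of _ "Pow V \<times> Pow V"]) (use \<open>finite V\<close> in auto)
  then have "card D \<le> card {(X, Y). X \<subseteq> V \<and> Y \<subseteq> V \<and> X \<inter> Y = {}}"
    by (rule card_mono) (auto simp: D_def)
  also have "\<dots> \<le> 3 ^ (6 * n)" using card_disjoint_pairs_le[OF \<open>finite V\<close>] \<open>card V = 6 * n\<close> by simp
  finally have card_D: "card D \<le> 3 ^ (6 * n)" .
  have cross: "cross p \<subseteq> P \<and> n * n \<le> card (cross p)" if "p \<in> D" for p
  proof -
    obtain X Y where p: "p = (X, Y)" by (cases p)
    with that have XY: "X \<subseteq> V" "Y \<subseteq> V" "X \<inter> Y = {}" "n \<le> card X" "n \<le> card Y"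
      by (auto simp: D_def)
    then have "card (cross p) = card X * card Y"
      using \<open>finite V\<close> finite_subset unfolding cross_def p by (metis card_doubletons_Times fst_conv snd_conv)
    moreover have "cross p \<subseteq> P" using XY unfolding cross_def p P_def by (auto simp: card_insert_if)
    ultimately show ?thesis using XY(4,5) by (simp add: mult_le_mono)
  qed
  note choose_deficit_bound_complete_graph[OF \<open>8 \<le> n\<close>, folded card_P]
  with card_D have few: "card D * ((card P - n * n) choose (136 * n)) < card P choose (136 * n)"
    by (rule le_less_trans[OF mult_le_mono1])
  have "\<exists>E. E \<subseteq> P \<and> card E = 136 * n \<and> (\<forall>p\<in>D. E \<inter> cross p \<noteq> {})"
    by (rule exists_subset_meeting_all[where F = cross and K = "n * n" and m = "136 * n"])
      (use \<open>finite P\<close> \<open>finite D\<close> cross few in auto)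
  then obtain E where "E \<subseteq> P" "card E = 136 * n" and meets: "\<forall>p\<in>D. E \<inter> cross p \<noteq> {}"
    by blast
  show thesis
  proof (rule that)
    show "simple_graph E"
      using \<open>E \<subseteq> P\<close> finite_subset[OF \<open>E \<subseteq> P\<close> \<open>finite P\<close>] by (auto simp: simple_graph_def P_def)
    show "card E = 136 * n" by fact
    show "joins_large_sets E {0..<6 * n} n"
      unfolding joins_large_sets_def
    proof (intro allI impI)
      fix X Y assume "X \<subseteq> {0..<6 * n}" "Y \<subseteq> {0..<6 * n}" "X \<inter> Y = {}" "n \<le> card X" "n \<le> card Y"
      then have "(X, Y) \<in> D" by (simp add: D_def V_def)
      then show "\<exists>x\<in>X. \<exists>y\<in>Y. {x, y} \<in> E" using meets by (auto simp: cross_def)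
    qed
  qed
qed

theorem theorem1p1:
  shows "\<exists>N. \<forall>n\<ge>N. size_ramsey_path n < 137 * n"
proof (intro exI allI impI)
  fix n :: nat
  assume "8 \<le> n"
  then obtain E :: "nat set set"
    where "simple_graph E" "card E = 136 * n" "joins_large_sets E {0..<6 * n} n"
    by (rule exists_graph_joining_large_sets)
  moreover have "arrows_path E n"
    using \<open>8 \<le> n\<close> \<open>joins_large_sets E {0..<6 * n} n\<close>
    by (intro arrows_path_if_joins_large_sets[of "{0..<6 * n}"]) auto
  ultimately have "size_ramsey_path n \<le> 136 * n"
    unfolding size_ramsey_path_def by (intro Least_le) blast
  then show "size_ramsey_path n < 137 * n" using \<open>8 \<le> n\<close> by simp
qed

end
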